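(* Let $\mathbb{F}_q$ have prime characteristic $p$. For every integer $k\ge1$, \[\bigcup_{i=1}^k \{p^j : 0\le j\le t_i\}\,D(q^i-1)\ \subseteq\ P(k,\mathbb{F}_q),\] where $t_i=\min\{t\in\mathbb{Z} : p^t\ge\lfloor k/i\rfloor\}$ for $1\le i\le k$.
   Context: A sequence $(a_n)_{n\ge0}$ over $\mathbb{F}_q$ satisfies a linear recurrence of degree $k$ if there are $c_0,\dots,c_{k-1}\in\mathbb{F}_q$, with $c_0\neq0$ (standing assumption), such that $a_{n+k}=\sum_{i=0}^{k-1}c_ia_{n+i}$ for all $n\ge0$; such sequences are purely periodic and $\rho(\mathbf{a})$ is the least $m>0$ with $a_{n+m}=a_n$ for all $n\ge0$. $P(k,\mathbb{F}_q)$ is the set of all $\rho(\mathbf{a})$ for sequences $\mathbf{a}$ satisfying some linear recurrence of degree $k$ over $\mathbb{F}_q$. For $n\in\mathbb{Z}_{>0}$, $D(n)$ is the set of positive divisors of $n$. For sets $S_1,S_2\subseteq\mathbb{Z}$ and $a\in\mathbb{Z}$, $aS_1=\{ax: x\in S_1\}$ and $S_1S_2=\{xy : x\in S_1, y\in S_2\}$. *)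

theory Defs
  imports Main "HOL-Computational_Algebra.Primes"
begin

definition satisfies_lin_rec :: "nat \<Rightarrow> (nat \<Rightarrow> 'a::field) \<Rightarrow> bool" where
  "satisfies_lin_rec k a \<longleftrightarrow>
     (\<exists>c :: nat \<Rightarrow> 'a. c 0 \<noteq> 0 \<and>
        (\<forall>n. a (n + k) = (\<Sum>i<k. c i * a (n + i))))"

definition least_period :: "(nat \<Rightarrow> 'a) \<Rightarrow> nat" where
  "least_period a = (LEAST m. m > 0 \<and> (\<forall>n. a (n + m) = a n))"

definition periods_set :: "nat \<Rightarrow> 'a::{finite,field} itself \<Rightarrow> nat set" where
  "periods_set k _ = {m. \<exists>a :: nat \<Rightarrow> 'a. satisfies_lin_rec k a \<and> m = least_period a}"

definition divisors_set :: "nat \<Rightarrow> nat set" where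
  "divisors_set n = {d. d > 0 \<and> d dvd n}"

definition t_exp :: "nat \<Rightarrow> nat \<Rightarrow> nat \<Rightarrow> nat" where
  "t_exp p k i = (LEAST t::nat. p ^ t \<ge> k div i)"

end

theory Submission
  imports Defs "HOL-Algebra.Algebraic_Closure_Type" "HOL-Algebra.Sylow" "HOL-Number_Theory.Residues"
begin

text \<open>
  Every number in the union is the order of a polynomial with nonzero constant term and degree
  at most k, where the order of f is the least n > 0 with f dvd X^n - 1. Such an f has an
  associated linear recurrent sequence whose least period is exactly its order. For d dividing
  q^i - 1, an element of multiplicative order d in the algebraic closure lies in the field with
  q^i elements, and a pigeonhole argument gives its minimal polynomial m over F_q, of degree at
  most i and order d. Since X^(p^s n) - 1 = (X^n - 1)^(p^s) and X^n - 1 is squarefree for p not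
  dividing n, the power m^e has order p^j d as soon as p^(j-1) < e \<le> p^j; the choice of t_i
  makes e = p^(j-1) + 1 satisfy e i \<le> k.
\<close>

hide_const (open) Divisibility.prime

section \<open>Impulse responses of linear recurrences\<close>

definition rem_top_coeff :: "'a::field poly \<Rightarrow> 'a poly \<Rightarrow> 'a" where
  "rem_top_coeff f h = coeff (h mod f) (degree f - 1)"

text \<open>The impulse response of the recurrence with characteristic polynomial f: its first
  deg f - 1 terms vanish and the next one is 1.\<close>
definition impulse_response :: "'a::field poly \<Rightarrow> nat \<Rightarrow> 'a" where
  "impulse_response f n = rem_top_coeff f (monom 1 n)"

lemma rem_top_coeff_add: "rem_top_coeff f (a + b) = rem_top_coeff f a + rem_top_coeff f b"
  by (simp add: rem_top_coeff_def poly_mod_add_left)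

lemma rem_top_coeff_diff: "rem_top_coeff f (a - b) = rem_top_coeff f a - rem_top_coeff f b"
  by (simp add: rem_top_coeff_def poly_mod_diff_left)

lemma rem_top_coeff_smult: "rem_top_coeff f (smult c a) = c * rem_top_coeff f a"
  by (simp add: rem_top_coeff_def mod_smult_left)

lemma rem_top_coeff_sum: "rem_top_coeff f (\<Sum>i\<in>A. g i) = (\<Sum>i\<in>A. rem_top_coeff f (g i))"
  by (induction A rule: infinite_finite_induct)
    (simp_all add: rem_top_coeff_add, simp_all add: rem_top_coeff_def)

lemma rem_top_coeff_eq_0_if_dvd: "f dvd h \<Longrightarrow> rem_top_coeff f h = 0"
  by (simp add: rem_top_coeff_def)

lemma rem_top_coeff_cong: "a mod f = b mod f \<Longrightarrow> rem_top_coeff f a = rem_top_coeff f b"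
  by (simp add: rem_top_coeff_def)

lemma impulse_response_annihilated:
  fixes f F :: "'a::field poly"
  assumes "f dvd F"
  shows "(\<Sum>i\<le>degree F. coeff F i * impulse_response f (n + i)) = 0"
proof -
  have "F * monom 1 n = (\<Sum>i\<le>degree F. monom (coeff F i) i) * monom 1 n"
    by (simp add: poly_as_sum_of_monoms)
  also have "\<dots> = (\<Sum>i\<le>degree F. smult (coeff F i) (monom 1 (n + i)))"
    by (simp add: sum_distrib_right mult_monom smult_monom add.commute)
  finally have expand: "F * monom 1 n = (\<Sum>i\<le>degree F. smult (coeff F i) (monom 1 (n + i)))" .
  have "rem_top_coeff f (F * monom 1 n) = 0"
    using assms by (intro rem_top_coeff_eq_0_if_dvd) auto
  then show ?thesis
    unfolding expand rem_top_coeff_sum rem_top_coeff_smult impulse_response_def .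
qed

lemma impulse_response_shift_invariant_iff:
  fixes f :: "'a::field poly"
  assumes "degree f \<ge> 1"
  shows "(\<forall>n. impulse_response f (n + e) = impulse_response f n) \<longleftrightarrow> f dvd monom 1 e - 1"
proof -
  have shift: "monom 1 n * (monom 1 e - 1) = monom 1 (n + e) - (monom 1 n :: 'a poly)" for n
    by (simp add: algebra_simps mult_monom)
  show ?thesis
  proof
    assume "f dvd monom 1 e - 1"
    then have "f dvd monom 1 n * (monom 1 e - 1)" for n
      by auto
    then show "\<forall>n. impulse_response f (n + e) = impulse_response f n"
      unfolding shift by (metis rem_top_coeff_diff rem_top_coeff_eq_0_if_dvd eq_iff_diff_eq_0
          impulse_response_def)
  next
    assume periodic: "\<forall>n. impulse_response f (n + e) = impulse_response f n"
    define z where "z = (monom 1 e - 1) mod f"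
    have f0: "f \<noteq> 0"
      using assms by auto
    have z_annihilated: "rem_top_coeff f (monom 1 n * z) = 0" for n
    proof -
      have "(monom 1 n * z) mod f = (monom 1 n * (monom 1 e - 1)) mod f"
        unfolding z_def by (simp add: mod_mult_right_eq)
      then have "rem_top_coeff f (monom 1 n * z) = rem_top_coeff f (monom 1 n * (monom 1 e - 1))"
        by (rule rem_top_coeff_cong)
      then show ?thesis
        using periodic by (simp add: shift rem_top_coeff_diff impulse_response_def[symmetric])
    qed
    show "f dvd monom 1 e - 1"
    proof (rule ccontr)
      assume "\<not> f dvd monom 1 e - 1"
      then have z0: "z \<noteq> 0"
        unfolding z_def by (simp add: mod_eq_0_iff_dvd)
      have dz: "degree z < degree f"
        using degree_mod_less'[OF f0] z0 unfolding z_def by auto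
      \<comment> \<open>shifting z up to degree deg f - 1 exposes its leading coefficient\<close>
      define n where "n = degree f - 1 - degree z"
      have "degree (monom (1::'a) n * z) = degree f - 1"
        using dz z0 by (simp add: degree_mult_eq degree_monom_eq n_def)
      then have "(monom 1 n * z) mod f = monom 1 n * z"
        using assms by (intro mod_poly_less) simp
      then have "rem_top_coeff f (monom 1 n * z) = coeff (monom 1 n * z) (n + degree z)"
        unfolding rem_top_coeff_def using dz by (simp add: n_def)
      also have "\<dots> = lead_coeff z"
        by (simp add: coeff_monom_mult)
      finally show False
        using z_annihilated z0 by simp
    qed
  qed
qed

lemma least_period_impulse_response:
  fixes f :: "'a::field poly"
  assumes "degree f \<ge> 1" "N > 0" "f dvd monom 1 N - 1"
    and "\<And>n. n > 0 \<Longrightarrow> f dvd monom 1 n - 1 \<Longrightarrow> N \<le> n"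
  shows "least_period (impulse_response f) = N"
  unfolding least_period_def
proof (rule Least_equality)
  show "0 < N \<and> (\<forall>n. impulse_response f (n + N) = impulse_response f n)"
    using assms impulse_response_shift_invariant_iff by blast
next
  fix y
  assume "0 < y \<and> (\<forall>n. impulse_response f (n + y) = impulse_response f n)"
  then show "N \<le> y"
    using assms impulse_response_shift_invariant_iff by blast
qed

lemma satisfies_lin_rec_impulse_response:
  fixes f :: "'a::field poly"
  assumes deg: "degree f \<ge> 1" "degree f \<le> k" and coeff0: "coeff f 0 \<noteq> 0"
  shows "satisfies_lin_rec k (impulse_response f)"
proof -
  \<comment> \<open>padding by powers of X - 1 gives a multiple of f of degree exactly k, still with
    nonzero constant term\<close>
  define F where "F = f * [:-1, 1:] ^ (k - degree f)"
  have f0: "f \<noteq> 0"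
    using deg by auto
  have dF: "degree F = k"
    unfolding F_def using f0 deg by (simp add: degree_mult_eq degree_power_eq)
  have cF0: "coeff F 0 \<noteq> 0"
    unfolding F_def using coeff0 by (simp add: coeff_mult_0 coeff_0_power)
  define lc where "lc = coeff F k"
  have "F \<noteq> 0"
    unfolding F_def using f0 by simp
  then have lc0: "lc \<noteq> 0"
    unfolding lc_def using dF by (metis leading_coeff_0_iff)
  define c where "c i = - coeff F i / lc" for i
  have "\<forall>n. impulse_response f (n + k) = (\<Sum>i<k. c i * impulse_response f (n + i))"
  proof
    fix n
    have "(\<Sum>i\<le>k. coeff F i * impulse_response f (n + i)) = 0"
      using impulse_response_annihilated[of f F n] dF unfolding F_def by simp
    then have "lc * impulse_response f (n + k) + (\<Sum>i<k. coeff F i * impulse_response f (n + i)) = 0"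
      by (simp add: lessThan_Suc_atMost[symmetric] lc_def add.commute)
    then have "impulse_response f (n + k) = - (\<Sum>i<k. coeff F i * impulse_response f (n + i)) / lc"
      using lc0 by (simp add: field_simps add_eq_0_iff)
    also have "\<dots> = (\<Sum>i<k. c i * impulse_response f (n + i))"
      by (simp add: c_def sum_divide_distrib sum_negf)
    finally show "impulse_response f (n + k) = (\<Sum>i<k. c i * impulse_response f (n + i))" .
  qed
  moreover have "c 0 \<noteq> 0"
    using cF0 lc0 by (simp add: c_def)
  ultimately show ?thesis
    unfolding satisfies_lin_rec_def by blast
qed

section \<open>The polynomials X^n - 1 in prime characteristic\<close>

lemma coeff_0_neq_0_if_dvd_X_power_minus_one:
  fixes f :: "'a::field poly"
  assumes "f dvd monom 1 N - 1" "N > 0"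
  shows "coeff f 0 \<noteq> 0"
proof
  assume "coeff f 0 = 0"
  then have "poly f 0 = 0"
    by (simp add: poly_0_coeff_0)
  moreover obtain w where "monom 1 N - 1 = f * w"
    using assms(1) by (elim dvdE)
  then have "poly (monom (1::'a) N - 1) 0 = poly f 0 * poly w 0"
    by simp
  ultimately show False
    using assms(2) by (simp add: poly_monom zero_power)
qed

lemma diff_one_power_CHAR_power:
  assumes "prime CHAR('a::comm_ring_1)"
  shows "(x - 1 :: 'a) ^ (CHAR('a) ^ s) = x ^ (CHAR('a) ^ s) - 1"
proof -
  have dream: "(y + z) ^ (CHAR('a) ^ s) = y ^ (CHAR('a) ^ s) + z ^ (CHAR('a) ^ s)" for y z :: 'a
    by (rule freshmans_dream'[OF assms]) simp
  have "1 + (-1 :: 'a) ^ (CHAR('a) ^ s) = (1 + (-1)) ^ (CHAR('a) ^ s)"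
    by (simp only: dream power_one)
  also have "\<dots> = 0"
    using assms prime_gt_0_nat by (simp add: zero_power)
  finally have "(-1 :: 'a) ^ (CHAR('a) ^ s) = -1"
    by (simp add: add_eq_0_iff)
  then show ?thesis
    using dream[of x "-1"] by simp
qed

lemma X_power_minus_one_CHAR_power:
  assumes "prime CHAR('a::field)"
  shows "monom (1::'a) (CHAR('a) ^ s * n) - 1 = (monom 1 n - 1) ^ (CHAR('a) ^ s)"
proof -
  have "prime CHAR('a poly)"
    using assms by simp
  from diff_one_power_CHAR_power[OF this, of "monom 1 n" s] show ?thesis
    by (simp add: monom_power mult.commute)
qed

lemma power_dvd_X_power_minus_one_CHAR_power:
  fixes m :: "'a::field poly"
  assumes "prime CHAR('a)" "m dvd monom 1 d - 1" "e \<le> CHAR('a) ^ j"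
  shows "m ^ e dvd monom 1 (CHAR('a) ^ j * d) - 1"
proof -
  have "m ^ e dvd m ^ (CHAR('a) ^ j)"
    using assms(3) by (rule le_imp_power_dvd)
  also have "\<dots> dvd (monom 1 d - 1) ^ (CHAR('a) ^ j)"
    using assms(2) by (rule dvd_power_same)
  finally show ?thesis
    using X_power_minus_one_CHAR_power[OF assms(1)] by simp
qed

lemma linear_square_not_dvd_X_power_minus_one:
  fixes a :: "'a::field"
  assumes "\<not> CHAR('a) dvd n"
  shows "\<not> [:-a, 1:] ^ 2 dvd monom 1 n - 1"
proof
  assume "[:-a, 1:] ^ 2 dvd monom 1 n - 1"
  then obtain w where w: "monom 1 n - 1 = [:-a, 1:] ^ 2 * w"
    by (elim dvdE)
  have n0: "n > 0"
    using assms by (cases n) auto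
  have "pderiv (P ^ 2 * w) = P * (P * pderiv w + w * (2 * pderiv P))" for P :: "'a poly"
    by (simp add: pderiv_mult power2_eq_square algebra_simps)
  then have "poly (pderiv (monom (1::'a) n - 1)) a = 0"
    unfolding w by simp
  moreover have "pderiv (monom (1::'a) n - 1) = smult (of_nat n) (monom 1 (n - 1))"
    by (simp add: pderiv_diff pderiv_monom smult_monom)
  moreover have "(of_nat n :: 'a) \<noteq> 0"
    using assms by (simp add: of_nat_eq_0_iff_char_dvd)
  ultimately have "a ^ (n - 1) = 0"
    by (simp add: poly_monom)
  moreover have "poly (monom (1::'a) n - 1) a = 0"
    unfolding w by simp
  then have "a * a ^ (n - 1) = 1"
    using n0 by (simp add: poly_monom power_eq_if split: if_splits)
  ultimately show False
    by simp
qed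

lemma order_power: "P \<noteq> 0 \<Longrightarrow> order a (P ^ k) = k * order a P"
  by (induction k) (simp_all add: order_mult)

lemma map_poly_to_ac_add: "map_poly to_ac (P + R) = map_poly to_ac P + map_poly to_ac R"
  by (rule poly_eqI) (simp add: coeff_map_poly)

lemma map_poly_to_ac_diff: "map_poly to_ac (P - R) = map_poly to_ac P - map_poly to_ac R"
  by (rule poly_eqI) (simp add: coeff_map_poly)

lemma map_poly_to_ac_mult: "map_poly to_ac (P * R) = map_poly to_ac P * map_poly to_ac R"
  by (rule poly_eqI) (simp add: coeff_map_poly coeff_mult to_ac_sum)

lemma map_poly_to_ac_power: "map_poly to_ac (P ^ n) = map_poly to_ac P ^ n"
  by (induction n) (simp_all add: map_poly_to_ac_mult)

lemma map_poly_to_ac_X_power_minus_one: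
  "map_poly to_ac (monom 1 n - 1 :: 'a::field poly) = monom 1 n - 1"
  by (simp add: map_poly_to_ac_diff map_poly_monom)

text \<open>Over an algebraic closure the squarefreeness of X^n - 1 bounds the multiplicity of any
  root of m, and X^(p^s n) - 1 = (X^n - 1)^(p^s).\<close>
lemma power_dvd_X_power_minus_one_exponent_le:
  fixes m :: "'a::field poly"
  assumes p: "prime CHAR('a)" and deg: "degree m \<ge> 1" and n: "\<not> CHAR('a) dvd n"
    and dvd: "m ^ e dvd monom 1 (CHAR('a) ^ s * n) - 1"
  shows "e \<le> CHAR('a) ^ s"
proof -
  define Y where "Y = (monom 1 n - 1 :: 'a alg_closure poly)"
  obtain a where "poly (map_poly to_ac m) a = 0"
    using alg_closed_imp_poly_has_root[of "map_poly to_ac m"] deg by (auto simp: degree_map_poly)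
  then have "[:-a, 1:] ^ e dvd map_poly to_ac m ^ e"
    by (intro dvd_power_same) (simp add: poly_eq_0_iff_dvd)
  also have "\<dots> dvd map_poly to_ac (monom 1 (CHAR('a) ^ s * n) - 1)"
    using dvd by (elim dvdE) (simp add: map_poly_to_ac_mult flip: map_poly_to_ac_power)
  also have "\<dots> = monom 1 (CHAR('a) ^ s * n) - 1"
    by (rule map_poly_to_ac_X_power_minus_one)
  also have "\<dots> = Y ^ (CHAR('a) ^ s)"
  proof -
    have "prime CHAR('a alg_closure)"
      using p by simp
    from X_power_minus_one_CHAR_power[OF this, of s n] show ?thesis
      unfolding Y_def by simp
  qed
  finally have root_dvd: "[:-a, 1:] ^ e dvd Y ^ (CHAR('a) ^ s)" .
  have Y0: "Y \<noteq> 0"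
    using n by (auto simp: Y_def dest: arg_cong[where f = "\<lambda>P. coeff P n"] split: if_splits)
  have "order a Y \<le> 1"
    using linear_square_not_dvd_X_power_minus_one[of n a] order_divides[of a 2 Y] n Y0
    unfolding Y_def by (simp add: not_less_eq_eq)
  have "e \<le> order a (Y ^ (CHAR('a) ^ s))"
    using root_dvd Y0 by (simp add: order_divides)
  also have "\<dots> = CHAR('a) ^ s * order a Y"
    using Y0 by (rule order_power)
  also have "\<dots> \<le> CHAR('a) ^ s"
    using \<open>order a Y \<le> 1\<close> by simp
  finally show ?thesis .
qed

section \<open>Elements of prescribed multiplicative order\<close>

definition is_mult_order :: "'a::monoid_mult \<Rightarrow> nat \<Rightarrow> bool" where
  "is_mult_order z n \<longleftrightarrow> (\<forall>e. z ^ e = 1 \<longleftrightarrow> n dvd e)"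

lemma power_gcd_eq_1:
  fixes z :: "'a::monoid_mult"
  assumes "z ^ a = 1" "z ^ b = 1"
  shows "z ^ gcd a b = 1"
proof (cases "a = 0")
  case False
  obtain x y where xy: "a * x = b * y + gcd a b"
    using bezout_nat[OF False, of b] by blast
  have "1 = z ^ (a * x)"
    using assms by (simp add: power_mult)
  also have "\<dots> = z ^ (b * y) * z ^ gcd a b"
    by (simp add: xy power_add)
  also have "\<dots> = z ^ gcd a b"
    using assms by (simp add: power_mult)
  finally show ?thesis
    by simp
qed (use assms in simp)

lemma is_mult_order_prime_power:
  fixes z :: "'a::monoid_mult"
  assumes l: "prime l" and k: "k \<ge> 1" and "z ^ (l ^ k) = 1" "z ^ (l ^ (k - 1)) \<noteq> 1"
  shows "is_mult_order z (l ^ k)"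
  unfolding is_mult_order_def
proof (intro allI iffI)
  fix e
  assume "z ^ e = 1"
  then have g: "z ^ gcd e (l ^ k) = 1"
    using assms(3) by (rule power_gcd_eq_1)
  obtain t where t: "t \<le> k" "gcd e (l ^ k) = l ^ t"
    using divides_primepow_nat[OF l, of "gcd e (l ^ k)" k] by auto
  show "l ^ k dvd e"
  proof (cases "t = k")
    case False
    then have "l ^ t dvd l ^ (k - 1)"
      using t by (simp add: le_imp_power_dvd)
    then have "z ^ (l ^ (k - 1)) = 1"
      using g t by (auto elim!: dvdE simp: power_mult)
    then show ?thesis
      using assms(4) by simp
  qed (metis t(2) gcd_dvd1)
next
  fix e
  assume "l ^ k dvd e"
  then show "z ^ e = 1"
    using assms(3) by (auto elim!: dvdE simp: power_mult)
qed

lemma is_mult_order_mult: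
  fixes x y :: "'a::comm_monoid_mult"
  assumes x: "is_mult_order x a" and y: "is_mult_order y b" and ab: "coprime a b"
  shows "is_mult_order (x * y) (a * b)"
  unfolding is_mult_order_def
proof (intro allI iffI)
  fix e
  assume xy: "(x * y) ^ e = 1"
  have "x ^ (e * a) = 1" "y ^ (e * b) = 1"
    using x y by (simp_all add: is_mult_order_def power_mult mult.commute[of e] flip: power_mult)
  moreover have "(x * y) ^ (e * a) = 1" "(x * y) ^ (e * b) = 1"
    using xy by (simp_all add: power_mult)
  ultimately have "y ^ (e * a) = 1" "x ^ (e * b) = 1"
    by (simp_all add: power_mult_distrib)
  then have "b dvd e * a" "a dvd e * b"
    using x y by (simp_all add: is_mult_order_def)
  then have "a dvd e" "b dvd e"
    using ab by (simp_all add: coprime_commute coprime_dvd_mult_left_iff)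
  then show "a * b dvd e"
    using ab by (simp add: divides_mult)
next
  fix e
  assume "a * b dvd e"
  then have "x ^ e = 1" "y ^ e = 1"
    using x y unfolding is_mult_order_def by (auto intro: dvd_mult_left dvd_mult_right)
  then show "(x * y) ^ e = 1"
    by (simp add: power_mult_distrib)
qed

lemma exists_is_mult_order_prime:
  assumes l: "prime l" and lc: "\<not> CHAR('a::alg_closed_field) dvd l"
  shows "\<exists>w::'a. is_mult_order w l"
proof -
  have l2: "l \<ge> 2"
    using l by (simp add: prime_ge_2_nat)
  obtain w :: 'a where "(\<Sum>k\<le>l - 1. 1 * w ^ k) = 0"
    using alg_closed[of "l - 1" "\<lambda>_. 1::'a"] l2 by auto
  moreover have "{..l - 1} = {..<l}"
    using l2 by auto
  ultimately have geometric: "(\<Sum>k<l. w ^ k) = 0"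
    by simp
  have "w \<noteq> 1"
  proof
    assume "w = 1"
    then have "(of_nat l :: 'a) = 0"
      using geometric by simp
    then show False
      using lc by (simp add: of_nat_eq_0_iff_char_dvd)
  qed
  moreover have "w ^ l = 1"
    using power_diff_1_eq[of w l] geometric by simp
  ultimately have "is_mult_order w (l ^ 1)"
    by (intro is_mult_order_prime_power[OF l]) simp_all
  then show ?thesis
    by auto
qed

lemma exists_is_mult_order_prime_power:
  assumes l: "prime l" and lc: "\<not> CHAR('a::alg_closed_field) dvd l" and k: "k \<ge> 1"
  shows "\<exists>z::'a. is_mult_order z (l ^ k)"
proof -
  obtain w :: 'a where w: "is_mult_order w l"
    using exists_is_mult_order_prime[OF l lc] by blast
  obtain z :: 'a where z: "z ^ (l ^ (k - 1)) = w"
    using nth_root_exists[of "l ^ (k - 1)" w] l prime_gt_0_nat by auto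
  have lk: "l ^ k = l ^ (k - 1) * l"
    using k by (simp add: power_eq_if)
  have "z ^ (l ^ k) = 1"
    using z w unfolding lk power_mult by (simp add: is_mult_order_def)
  moreover have "w ^ 1 \<noteq> 1"
    using w l unfolding is_mult_order_def by (metis nat_dvd_1_iff_1 not_prime_1)
  then have "z ^ (l ^ (k - 1)) \<noteq> 1"
    using z by simp
  ultimately show ?thesis
    using is_mult_order_prime_power[OF l k] by blast
qed

lemma exists_is_mult_order:
  assumes p: "prime CHAR('a::alg_closed_field)" and "\<not> CHAR('a) dvd d"
  shows "\<exists>z::'a. is_mult_order z d"
  using assms(2)
proof (induction d rule: less_induct)
  case (less d)
  show ?case
  proof (cases "d = 1")
    case True
    then show ?thesis
      by (intro exI[of _ 1]) (simp add: is_mult_order_def)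
  next
    case False
    have d0: "d \<noteq> 0"
      using less.prems by (cases d) auto
    obtain l where l: "prime l" "l dvd d"
      using prime_factor_nat[OF False] by blast
    have "\<not> is_unit l"
      using l(1) not_prime_unit by blast
    define k where "k = multiplicity l d"
    obtain d' where dd: "d = l ^ k * d'" and ld': "\<not> l dvd d'"
      unfolding k_def using d0 \<open>\<not> is_unit l\<close> by (rule multiplicity_decompose')
    have k1: "k \<ge> 1"
    proof (rule ccontr)
      assume "\<not> k \<ge> 1"
      then have "d = d'"
        using dd by simp
      then show False
        using l(2) ld' by simp
    qed
    have "1 < l ^ k"
      using k1 prime_gt_1_nat[OF l(1)] by (intro one_less_power) auto
    moreover have "d' > 0"
      using dd d0 by (cases d') auto
    ultimately have "d' < d"
      unfolding dd by simp
    moreover have "\<not> CHAR('a) dvd d'"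
      using less.prems dvd_trans[of "CHAR('a)" d' d] dd by auto
    ultimately obtain z' :: 'a where z': "is_mult_order z' d'"
      using less.IH by blast
    have "\<not> CHAR('a) dvd l"
    proof
      assume "CHAR('a) dvd l"
      then have "CHAR('a) = l"
        using primes_dvd_imp_eq[OF p l(1)] by blast
      then show False
        using less.prems l(2) by simp
    qed
    then obtain zl :: 'a where zl: "is_mult_order zl (l ^ k)"
      using exists_is_mult_order_prime_power[OF l(1) _ k1] by blast
    have "coprime (l ^ k) d'"
      using l(1) ld' by (simp add: prime_imp_coprime)
    then show ?thesis
      using is_mult_order_mult[OF zl z'] dd by auto
  qed
qed

section \<open>Finite fields\<close>

lemma prime_CHAR_finite_field: "prime CHAR('a::{finite,field})"
  by (rule prime_CHAR_semidom) (simp add: finite_imp_CHAR_pos)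

lemma exists_nonzero_prime_power_torsion:
  fixes l :: nat
  assumes l: "prime l" and dvd: "l dvd card (UNIV :: 'a::{finite,ring_1} set)"
  shows "\<exists>x::'a. \<exists>a. x \<noteq> 0 \<and> of_nat (l ^ a) * x = 0"
proof -
  define G where "G = \<lparr>carrier = (UNIV :: 'a set), monoid.mult = (+), one = (0 :: 'a)\<rparr>"
  interpret group G
  proof (rule groupI)
    fix x
    assume "x \<in> carrier G"
    show "\<exists>y\<in>carrier G. y \<otimes>\<^bsub>G\<^esub> x = \<one>\<^bsub>G\<^esub>"
      by (intro bexI[of _ "-x"]) (auto simp: G_def)
  qed (auto simp: G_def add_ac)
  have G_pow: "x [^]\<^bsub>G\<^esub> n = of_nat n * x" for x :: 'a and n :: nat
    by (induction n) (simp_all add: G_def algebra_simps)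
  define a where "a = multiplicity l (card (UNIV :: 'a set))"
  have "card (UNIV :: 'a set) \<noteq> 0" "\<not> is_unit l"
    using l not_prime_unit by auto
  then obtain r where qr: "card (UNIV :: 'a set) = l ^ a * r" and "\<not> l dvd r"
    unfolding a_def by (rule multiplicity_decompose')
  then have "a \<ge> 1"
    using dvd by (cases a) auto
  then have "l ^ 1 \<le> l ^ a"
    using l prime_ge_1_nat by (intro power_increasing)
  then have "l ^ a \<ge> 2"
    using prime_ge_2_nat[OF l] by simp
  obtain H where H: "subgroup H G" "card H = l ^ a"
    using sylow_thm[OF l is_group, of a r] qr unfolding Coset.order_def G_def by auto
  have "\<not> H \<subseteq> {0}"
    using card_mono[of "{0::'a}" H] H(2) \<open>l ^ a \<ge> 2\<close> by auto
  then obtain x where x: "x \<in> H" "x \<noteq> 0"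
    by blast
  interpret H: group "G\<lparr>carrier := H\<rparr>"
    using subgroup_imp_group[OF H(1)] .
  have "x [^]\<^bsub>G\<lparr>carrier := H\<rparr>\<^esub> Coset.order (G\<lparr>carrier := H\<rparr>) = \<one>\<^bsub>G\<lparr>carrier := H\<rparr>\<^esub>"
    using x(1) by (intro H.pow_order_eq_1) auto
  then have "x [^]\<^bsub>G\<^esub> (l ^ a) = 0"
    using H(2) nat_pow_consistent[of x "l ^ a" H] unfolding Coset.order_def by (simp add: G_def)
  then show ?thesis
    using x(2) by (auto simp: G_pow)
qed

lemma card_UNIV_eq_CHAR_power: "\<exists>M. card (UNIV :: 'a::{finite,field} set) = CHAR('a) ^ M"
proof -
  have p: "prime CHAR('a)"
    by (rule prime_CHAR_finite_field)
  have only_CHAR: "l = CHAR('a)" if l: "prime l" "l dvd card (UNIV :: 'a set)" for l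
  proof -
    obtain x :: 'a and a where "x \<noteq> 0" "of_nat (l ^ a) * x = 0"
      using exists_nonzero_prime_power_torsion[OF l] by blast
    then have "of_nat (l ^ a) = (0 :: 'a)"
      by simp
    then have "CHAR('a) dvd l ^ a"
      by (simp only: of_nat_eq_0_iff_char_dvd)
    then have "CHAR('a) dvd l"
      by (rule prime_dvd_power[OF p])
    then show ?thesis
      using primes_dvd_imp_eq[OF p l(1)] by simp
  qed
  have "card (UNIV :: 'a set) \<noteq> 0" "\<not> is_unit CHAR('a)"
    using p not_prime_unit by auto
  then obtain r where qr: "card (UNIV :: 'a set) = CHAR('a) ^ multiplicity CHAR('a) (card (UNIV :: 'a set)) * r"
    and "\<not> CHAR('a) dvd r"
    by (rule multiplicity_decompose')
  moreover have "r = 1"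
  proof (rule ccontr)
    assume "r \<noteq> 1"
    then obtain l where "prime l" "l dvd r"
      using prime_factor_nat by blast
    moreover have "l dvd card (UNIV :: 'a set)"
      using \<open>l dvd r\<close> qr by (metis dvd_mult)
    ultimately show False
      using only_CHAR[of l] \<open>\<not> CHAR('a) dvd r\<close> by simp
  qed
  ultimately show ?thesis
    by auto
qed

lemma power_card_UNIV_eq_self:
  fixes x :: "'a::{finite,field}"
  shows "x ^ card (UNIV :: 'a set) = x"
proof (cases "x = 0")
  case False
  define U where "U = UNIV - {0 :: 'a}"
  have "x ^ card U * (\<Prod>y\<in>U. y) = (\<Prod>y\<in>U. x * y)"
    by (simp add: prod.distrib)
  also have "\<dots> = (\<Prod>y\<in>U. y)"
    using False by (intro prod.reindex_bij_witness[of _ "\<lambda>y. y / x" "\<lambda>y. x * y"]) (auto simp: U_def)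
  finally have "x ^ card U = 1"
    by (simp add: U_def)
  moreover have "card (UNIV :: 'a set) = Suc (card U)"
    unfolding U_def by (simp add: card_Diff_singleton Suc_diff_1 finite_UNIV_card_ge_0)
  ultimately show ?thesis
    by simp
qed (simp add: finite_UNIV_card_ge_0)

lemma power_card_UNIV_power_eq_self:
  fixes x :: "'a::{finite,field}"
  shows "x ^ (card (UNIV :: 'a set) ^ n) = x"
  by (induction n) (simp_all add: power_card_UNIV_eq_self power_mult)

lemma not_CHAR_dvd_if_dvd_card_power_minus_one:
  assumes "i \<ge> 1" "d dvd card (UNIV :: 'a::{finite,field} set) ^ i - 1"
  shows "\<not> CHAR('a) dvd d"
proof
  define Q where "Q = card (UNIV :: 'a set) ^ i"
  assume "CHAR('a) dvd d"
  then have "CHAR('a) dvd Q - 1"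
    using assms(2) unfolding Q_def by (rule dvd_trans)
  have "card (UNIV :: 'a set) dvd Q"
    unfolding Q_def using assms(1) by (simp add: dvd_power)
  then have "CHAR('a) dvd Q"
    using CHAR_dvd_CARD by (rule dvd_trans[rotated])
  then have "CHAR('a) dvd Q - (Q - 1)"
    using \<open>CHAR('a) dvd Q - 1\<close> by (rule dvd_diff_nat)
  moreover have "Q \<ge> 1"
    unfolding Q_def using finite_UNIV_card_ge_0[where 'a = 'a] by (simp add: Suc_le_eq)
  ultimately have "CHAR('a) dvd 1"
    by simp
  then show False
    using prime_CHAR_finite_field[where 'a = 'a] by simp
qed

section \<open>Polynomials of prescribed order\<close>

text \<open>Frobenius: x \<mapsto> x^(q^i) is additive, since q is a power of the characteristic, and it
  fixes the coefficients.\<close>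
lemma poly_to_ac_power_card_power:
  fixes P :: "'a::{finite,field} poly" and \<beta> :: "'a alg_closure"
  assumes \<beta>: "\<beta> ^ (card (UNIV :: 'a set) ^ i) = \<beta>"
  shows "poly (map_poly to_ac P) \<beta> ^ (card (UNIV :: 'a set) ^ i) = poly (map_poly to_ac P) \<beta>"
proof -
  define Q where "Q = card (UNIV :: 'a set) ^ i"
  define P' where "P' = map_poly to_ac P"
  obtain M where "card (UNIV :: 'a set) = CHAR('a) ^ M"
    using card_UNIV_eq_CHAR_power by blast
  then have Q: "Q = CHAR('a alg_closure) ^ (M * i)"
    unfolding Q_def by (simp add: power_mult)
  have term_fixed: "(coeff P' j * \<beta> ^ j) ^ Q = coeff P' j * \<beta> ^ j" for j
  proof -
    have "coeff P' j ^ Q = coeff P' j"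
      unfolding P'_def Q_def
      by (simp add: coeff_map_poly power_card_UNIV_power_eq_self flip: to_ac_power)
    moreover have "(\<beta> ^ j) ^ Q = \<beta> ^ j"
      using \<beta> unfolding Q_def by (simp flip: power_mult add: mult.commute[of j] power_mult)
    ultimately show ?thesis
      by (simp add: power_mult_distrib)
  qed
  have "poly P' \<beta> ^ Q = (\<Sum>j\<le>degree P'. (coeff P' j * \<beta> ^ j) ^ Q)"
    unfolding poly_altdef using prime_CHAR_finite_field[where 'a = 'a]
    by (intro freshmans_dream_sum'[OF _ Q]) simp
  also have "\<dots> = (\<Sum>j\<le>degree P'. coeff P' j * \<beta> ^ j)"
    by (simp only: term_fixed)
  finally show ?thesis
    unfolding P'_def Q_def poly_altdef .
qed

lemma exists_poly_degree_le_root: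
  fixes \<beta> :: "'a::{finite,field} alg_closure"
  assumes i: "i \<ge> 1" and \<beta>: "\<beta> ^ (card (UNIV :: 'a set) ^ i) = \<beta>"
  shows "\<exists>P::'a poly. P \<noteq> 0 \<and> degree P \<le> i \<and> poly (map_poly to_ac P) \<beta> = 0"
proof -
  define q where "q = card (UNIV :: 'a set)"
  define ev where "ev P = poly (map_poly to_ac P) \<beta>" for P :: "'a poly"
  define T where "T = {z :: 'a alg_closure. z ^ (q ^ i) = z}"
  define D where "D = Poly ` {xs :: 'a list. length xs = i + 1}"
  have "q \<ge> 2"
    using card_mono[of "UNIV :: 'a set" "{0, 1}"] unfolding q_def by simp
  have card_T: "card T \<le> q ^ i" and "finite T"
  proof -
    define R where "R = monom (1::'a alg_closure) (q ^ i) - monom 1 1"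
    have "q ^ 1 \<le> q ^ i"
      using i \<open>q \<ge> 2\<close> by (intro power_increasing) auto
    then have "q ^ i \<ge> 2"
      using \<open>q \<ge> 2\<close> by simp
    then have "coeff R (q ^ i) = 1"
      unfolding R_def by (simp add: coeff_monom)
    then have "R \<noteq> 0"
      by auto
    have "degree R \<le> q ^ i"
      unfolding R_def using \<open>q ^ i \<ge> 2\<close>
      by (intro degree_diff_le) (auto intro: le_trans[OF degree_monom_le])
    moreover have "T = {z. poly R z = 0}"
      unfolding T_def R_def by (simp add: poly_monom)
    then show "card T \<le> q ^ i" "finite T"
      using card_poly_roots_bound[OF \<open>R \<noteq> 0\<close>] poly_roots_finite[OF \<open>R \<noteq> 0\<close>]
        \<open>degree R \<le> q ^ i\<close> by auto
  qed
  have "inj_on Poly {xs :: 'a list. length xs = i + 1}"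
  proof (rule inj_onI)
    fix xs ys :: "'a list"
    assume "xs \<in> {xs. length xs = i + 1}" "ys \<in> {xs. length xs = i + 1}" "Poly xs = Poly ys"
    then show "xs = ys"
    proof (intro nth_equalityI)
      fix k
      assume "k < length xs"
      then have "coeff (Poly xs) k = xs ! k" "coeff (Poly ys) k = ys ! k"
        using \<open>xs \<in> _\<close> \<open>ys \<in> _\<close> by (auto simp: nth_default_def)
      then show "xs ! k = ys ! k"
        using \<open>Poly xs = Poly ys\<close> by simp
    qed simp
  qed
  then have "card D = q ^ (i + 1)"
    unfolding D_def q_def using card_lists_length_eq[of "UNIV :: 'a set" "i + 1"]
    by (simp add: card_image)
  moreover have "ev ` D \<subseteq> T"
    unfolding T_def ev_def q_def using poly_to_ac_power_card_power[OF \<beta>] by auto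
  then have "card (ev ` D) \<le> q ^ i"
    using card_mono[OF \<open>finite T\<close>] card_T by (meson le_trans)
  moreover have "q ^ i < q ^ (i + 1)"
    using \<open>q \<ge> 2\<close> by simp
  ultimately have "card (ev ` D) < card D"
    by linarith
  then have "\<not> inj_on ev D"
    by (rule pigeonhole)
  then obtain P1 P2 where "P1 \<in> D" "P2 \<in> D" "P1 \<noteq> P2" "ev P1 = ev P2"
    unfolding inj_on_def by blast
  moreover have "degree P \<le> i" if "P \<in> D" for P
    using that unfolding D_def by (auto intro!: degree_le simp: nth_default_def)
  ultimately show ?thesis
    by (intro exI[of _ "P1 - P2"])
      (auto simp: ev_def map_poly_to_ac_diff intro: degree_diff_le)
qed

lemma exists_minimal_poly_to_ac:
  fixes P :: "'a::field poly"
  assumes "P \<noteq> 0" "poly (map_poly to_ac P) \<beta> = 0"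
  shows "\<exists>m. m \<noteq> 0 \<and> degree m \<le> degree P \<and>
           (\<forall>R. poly (map_poly to_ac R) \<beta> = 0 \<longleftrightarrow> m dvd R)"
proof -
  define ev where "ev R = poly (map_poly to_ac R) \<beta>" for R :: "'a poly"
  have ev_mult: "ev (R * S) = ev R * ev S" for R S
    by (simp add: ev_def map_poly_to_ac_mult)
  obtain m where m: "m \<noteq> 0" "ev m = 0"
    and minimal: "\<And>R. R \<noteq> 0 \<Longrightarrow> ev R = 0 \<Longrightarrow> degree m \<le> degree R"
    using ex_has_least_nat[of "\<lambda>R. R \<noteq> 0 \<and> ev R = 0" P degree] assms unfolding ev_def by blast
  have "m dvd R" if "ev R = 0" for R
  proof (rule ccontr)
    assume "\<not> m dvd R"
    then have r0: "R mod m \<noteq> 0"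
      by (simp add: mod_eq_0_iff_dvd)
    have "ev R = ev (R div m) * ev m + ev (R mod m)"
      by (metis div_mult_mod_eq ev_mult ev_def map_poly_to_ac_add poly_add)
    then have "degree m \<le> degree (R mod m)"
      using minimal[OF r0] that m(2) by simp
    then show False
      using degree_mod_less'[OF m(1) r0] by simp
  qed
  moreover have "ev R = 0" if "m dvd R" for R
    using that m(2) by (auto elim!: dvdE simp: ev_mult)
  ultimately show ?thesis
    using m minimal assms unfolding ev_def by blast
qed

lemma exists_poly_of_order:
  assumes i: "i \<ge> 1" and d: "d dvd card (UNIV :: 'a::{finite,field} set) ^ i - 1"
  shows "\<exists>m::'a poly. 1 \<le> degree m \<and> degree m \<le> i \<and> (\<forall>n. m dvd monom 1 n - 1 \<longleftrightarrow> d dvd n)"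
proof -
  define Q where "Q = card (UNIV :: 'a set) ^ i"
  have "\<not> CHAR('a alg_closure) dvd d"
    using not_CHAR_dvd_if_dvd_card_power_minus_one[OF i d] by simp
  moreover have "prime CHAR('a alg_closure)"
    using prime_CHAR_finite_field[where 'a = 'a] by simp
  ultimately obtain \<beta> :: "'a alg_closure" where \<beta>: "is_mult_order \<beta> d"
    using exists_is_mult_order by blast
  have "Q \<ge> 1"
    unfolding Q_def using finite_UNIV_card_ge_0[where 'a = 'a] by (simp add: Suc_le_eq)
  have "\<beta> ^ (Q - 1) = 1"
    using \<beta> d unfolding Q_def is_mult_order_def by blast
  have "\<beta> ^ Q = \<beta> ^ Suc (Q - 1)"
    using \<open>Q \<ge> 1\<close> by simp
  also have "\<dots> = \<beta>"
    using \<open>\<beta> ^ (Q - 1) = 1\<close> by simp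
  finally obtain P :: "'a poly" where P: "P \<noteq> 0" "degree P \<le> i" "poly (map_poly to_ac P) \<beta> = 0"
    using exists_poly_degree_le_root[OF i] unfolding Q_def by blast
  then obtain m :: "'a poly" where m: "m \<noteq> 0" "degree m \<le> degree P"
    and vanish: "\<And>R. poly (map_poly to_ac R) \<beta> = 0 \<longleftrightarrow> m dvd R"
    using exists_minimal_poly_to_ac[OF P(1,3)] by blast
  have "m dvd monom 1 n - 1 \<longleftrightarrow> d dvd n" for n
    using \<beta> unfolding vanish[symmetric] is_mult_order_def
    by (simp add: map_poly_to_ac_X_power_minus_one poly_monom)
  moreover have "degree m \<noteq> 0"
  proof
    assume "degree m = 0"
    then obtain c where "m = [:c:]"
      by (rule degree_eq_zeroE)
    then have "poly (map_poly to_ac m) \<beta> = to_ac c" "c \<noteq> 0"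
      using m(1) by (simp_all add: map_poly_pCons)
    then show False
      using vanish[of m] by simp
  qed
  moreover have "degree m \<le> i"
    using m(2) P(2) by simp
  ultimately show ?thesis
    by (intro exI[of _ m]) simp
qed

lemma least_period_impulse_response_power:
  fixes m :: "'a::field poly"
  assumes p: "prime CHAR('a)" and deg: "degree m \<ge> 1"
    and order: "\<And>n. m dvd monom 1 n - 1 \<longleftrightarrow> d dvd n" and pd: "\<not> CHAR('a) dvd d"
    and e: "e \<ge> 1" "e \<le> CHAR('a) ^ j" "\<And>s. s < j \<Longrightarrow> CHAR('a) ^ s < e"
  shows "least_period (impulse_response (m ^ e)) = CHAR('a) ^ j * d"
proof (rule least_period_impulse_response)
  have "m \<noteq> 0"
    using deg by auto
  then show "degree (m ^ e) \<ge> 1"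
    using deg e(1) by (simp add: degree_power_eq)
  have "d \<noteq> 0"
    using pd by (intro notI) simp
  then show "CHAR('a) ^ j * d > 0"
    using p prime_gt_0_nat by simp
  have "m dvd monom 1 d - 1"
    using order by simp
  then show "m ^ e dvd monom 1 (CHAR('a) ^ j * d) - 1"
    by (rule power_dvd_X_power_minus_one_CHAR_power[OF p _ e(2)])
next
  fix n
  assume "n > 0" and dvd: "m ^ e dvd monom 1 n - 1"
  define s where "s = multiplicity CHAR('a) n"
  have "n \<noteq> 0" "\<not> is_unit CHAR('a)"
    using \<open>n > 0\<close> p not_prime_unit by auto
  then obtain n' where n: "n = CHAR('a) ^ s * n'" and pn': "\<not> CHAR('a) dvd n'"
    unfolding s_def by (rule multiplicity_decompose')
  have "m dvd m ^ e"
    using e(1) by (simp add: dvd_power)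
  then have "m dvd monom 1 n - 1"
    using dvd by (rule dvd_trans)
  then have "d dvd n"
    using order by blast
  then have "d dvd CHAR('a) ^ s * n'"
    by (simp only: n)
  moreover have "coprime CHAR('a) d"
    using p pd by (rule prime_imp_coprime)
  then have "coprime d (CHAR('a) ^ s)"
    by (simp add: coprime_commute)
  ultimately have "d dvd n'"
    by (simp add: coprime_dvd_mult_right_iff)
  moreover have "n' \<noteq> 0"
    using pn' by (intro notI) simp
  ultimately have "d \<le> n'"
    by (simp add: dvd_imp_le)
  moreover have "e \<le> CHAR('a) ^ s"
    using power_dvd_X_power_minus_one_exponent_le[OF p deg pn'] dvd n by simp
  then have "j \<le> s"
    using e(3)[of s] by (meson not_le order.strict_trans2 less_irrefl)
  then have "CHAR('a) ^ j \<le> CHAR('a) ^ s"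
    using prime_ge_1_nat[OF p] by (rule power_increasing)
  ultimately show "CHAR('a) ^ j * d \<le> n"
    unfolding n by (rule mult_le_mono[rotated])
qed

text \<open>The witness is e = p^(j-1) + 1 (e = 1 if j = 0): the least exponent whose power of m has
  order p^j d, and the definition of t_i is exactly what makes it fit into degree k.\<close>
lemma exists_exponent_below_t_exp:
  fixes p :: nat
  assumes p: "p \<ge> 2" and i: "1 \<le> i" "i \<le> k" and j: "j \<le> t_exp p k i"
  shows "\<exists>e. 1 \<le> e \<and> e \<le> p ^ j \<and> (\<forall>s<j. p ^ s < e) \<and> e * i \<le> k"
proof (cases j)
  case 0
  then show ?thesis
    using i by (intro exI[of _ 1]) simp
next
  case (Suc j')
  then have "\<not> k div i \<le> p ^ j'"
    using j unfolding t_exp_def by (intro not_less_Least) simp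
  then have "(p ^ j' + 1) * i \<le> (k div i) * i"
    by (intro mult_le_mono1) simp
  also have "\<dots> \<le> k"
    by simp
  finally have "(p ^ j' + 1) * i \<le> k" .
  moreover have "p ^ j' + 1 \<le> p ^ j"
  proof -
    have "p ^ j' + 1 \<le> 2 * p ^ j'"
      using p by simp
    also have "\<dots> \<le> p * p ^ j'"
      using p by (intro mult_le_mono1)
    finally show ?thesis
      using Suc by simp
  qed
  moreover have "p ^ s < p ^ j' + 1" if "s < j" for s
  proof -
    have "p ^ s \<le> p ^ j'"
      using that Suc p by (intro power_increasing) auto
    then show ?thesis
      by simp
  qed
  ultimately show ?thesis
    by (intro exI[of _ "p ^ j' + 1"]) simp
qed

theorem theorem3p3:
  fixes p k :: nat
  assumes "prime p" and "CHAR('a::{finite,field}) = p" and "k \<ge> 1"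
  shows "(\<Union>i\<in>{1..k}. {p ^ j * d | j d. j \<le> t_exp p k i \<and>
                                       d \<in> divisors_set (card (UNIV :: 'a set) ^ i - 1)})
           \<subseteq> periods_set k TYPE('a)"
proof
  fix x
  assume "x \<in> (\<Union>i\<in>{1..k}. {p ^ j * d | j d. j \<le> t_exp p k i \<and>
                                       d \<in> divisors_set (card (UNIV :: 'a set) ^ i - 1)})"
  then obtain i j d where i: "1 \<le> i" "i \<le> k" and j: "j \<le> t_exp p k i"
    and d: "d dvd card (UNIV :: 'a set) ^ i - 1" and x: "x = p ^ j * d"
    unfolding divisors_set_def by auto
  have p: "prime CHAR('a)" "CHAR('a) = p"
    using prime_CHAR_finite_field assms(2) by auto
  obtain m :: "'a poly" where m: "1 \<le> degree m" "degree m \<le> i"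
    and order: "\<And>n. m dvd monom 1 n - 1 \<longleftrightarrow> d dvd n"
    using exists_poly_of_order[OF i(1) d] by blast
  obtain e where e: "1 \<le> e" "e \<le> p ^ j" "\<forall>s<j. p ^ s < e" "e * i \<le> k"
    using exists_exponent_below_t_exp[OF _ i j] p prime_ge_2_nat by blast
  have pd: "\<not> CHAR('a) dvd d"
    using not_CHAR_dvd_if_dvd_card_power_minus_one[OF i(1) d] .
  have "m \<noteq> 0"
    using m(1) by auto
  have "coeff m 0 \<noteq> 0"
    using coeff_0_neq_0_if_dvd_X_power_minus_one[of m d] order pd by (cases d) auto
  then have coeff0: "coeff (m ^ e) 0 \<noteq> 0"
    by (simp add: coeff_0_power)
  have "e * degree m \<le> k"
    using mult_le_mono2[OF m(2), of e] e(4) by linarith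
  then have deg: "1 \<le> degree (m ^ e)" "degree (m ^ e) \<le> k"
    using \<open>m \<noteq> 0\<close> m(1) e(1) by (simp_all add: degree_power_eq)
  have "satisfies_lin_rec k (impulse_response (m ^ e))"
    using satisfies_lin_rec_impulse_response[OF deg coeff0] .
  moreover have "least_period (impulse_response (m ^ e)) = x"
    using least_period_impulse_response_power[OF p(1) m(1) order pd] e p(2) x by simp
  ultimately show "x \<in> periods_set k TYPE('a)"
    unfolding periods_set_def by blast
qed

end
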